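(* Let $\Bbbk$ be an algebraically closed field of characteristic zero, $G$ a finite group, $\chi:G\to\Bbbk^\times$ a linear character, $g\in Z(G)$, $n\geq 2$ the multiplicative order of $\chi(g)$, and $\alpha\in\Bbbk$ with $\alpha(g^n-1)=0$ or $\chi^n=1$. Let $H$ be the $\Bbbk$-algebra generated by $\Bbbk G$ and $z$ with relations $z^n=\alpha(g^n-1)$ and $zs=\chi(s)sz$ for $s\in G$. Then for all $h_1,h_2\in\Bbbk G$ and $0\leq m\leq n-1$, there exists $h\in Z(\Bbbk G)$ with $h^2=h$ such that $(z^mh_1,z^mh_2)=(z^mh)$.
   Context: $(a_1,\dots,a_t)$ denotes the two-sided ideal of $H$ generated by $a_1,\dots,a_t$. *)

theory Defs
  imports "HOL-Algebra.Group" "HOL-Computational_Algebra.Polynomial"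
begin

definition alg_closed :: "'k::field itself \<Rightarrow> bool" where
  "alg_closed _ \<longleftrightarrow> (\<forall>p::'k poly. 0 < degree p \<longrightarrow> (\<exists>x. poly p x = 0))"

text \<open>Group algebra kG of a finite group G: functions G \<Rightarrow> k supported on carrier G
  (a = sum over s of a(s) s).\<close>
definition kG :: "('g,'b) monoid_scheme \<Rightarrow> ('g \<Rightarrow> 'k::field) set" where
  "kG G = {a. \<forall>u. u \<notin> carrier G \<longrightarrow> a u = 0}"

definition ga_mult :: "('g,'b) monoid_scheme \<Rightarrow> ('g \<Rightarrow> 'k::field) \<Rightarrow> ('g \<Rightarrow> 'k) \<Rightarrow> ('g \<Rightarrow> 'k)" where
  "ga_mult G a b = (\<lambda>u. if u \<in> carrier G
      then (\<Sum>s\<in>carrier G. a s * b (inv\<^bsub>G\<^esub> s \<otimes>\<^bsub>G\<^esub> u)) else 0)"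

definition ga_delta :: "('g,'b) monoid_scheme \<Rightarrow> 'g \<Rightarrow> ('g \<Rightarrow> 'k::field)" where
  "ga_delta G s = (\<lambda>u. if u = s then 1 else 0)"

definition kG_center :: "('g,'b) monoid_scheme \<Rightarrow> ('g \<Rightarrow> 'k::field) set" where
  "kG_center G = {h \<in> kG G. \<forall>a \<in> kG G. ga_mult G h a = ga_mult G a h}"

definition Hrel :: "('g,'b) monoid_scheme \<Rightarrow> 'k::field \<Rightarrow> 'g \<Rightarrow> nat \<Rightarrow> ('g \<Rightarrow> 'k)" where
  "Hrel G \<alpha> g n = (\<lambda>u. \<alpha> * (ga_delta G (g [^]\<^bsub>G\<^esub> n) u - ga_delta G \<one>\<^bsub>G\<^esub> u))"

text \<open>Twist: for a \<in> kG, a z^j = z^j (twist j a), since s z = \<chi>(s)^{-1} z s.\<close>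
definition twist :: "('g \<Rightarrow> 'k::field) \<Rightarrow> nat \<Rightarrow> ('g \<Rightarrow> 'k) \<Rightarrow> ('g \<Rightarrow> 'k)" where
  "twist \<chi> j a = (\<lambda>s. inverse (\<chi> s) ^ j * a s)"

text \<open>The algebra H, modelled on its standard basis: an element x stands for
  \<Sum>_{i<n} z^i (x i) with x i \<in> kG.\<close>
definition Hcarr :: "('g,'b) monoid_scheme \<Rightarrow> nat \<Rightarrow> (nat \<Rightarrow> 'g \<Rightarrow> 'k::field) set" where
  "Hcarr G n = {x. \<forall>i u. (n \<le> i \<or> u \<notin> carrier G) \<longrightarrow> x i u = 0}"

definition H_add :: "(nat \<Rightarrow> 'g \<Rightarrow> 'k::field) \<Rightarrow> (nat \<Rightarrow> 'g \<Rightarrow> 'k) \<Rightarrow> (nat \<Rightarrow> 'g \<Rightarrow> 'k)" where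
  "H_add x y = (\<lambda>i u. x i u + y i u)"

text \<open>(z^i a)(z^j b) = z^(i+j) (twist j a) b, and z^n = \<alpha>(g^n - 1).\<close>
definition H_mult :: "('g,'b) monoid_scheme \<Rightarrow> ('g \<Rightarrow> 'k::field) \<Rightarrow> 'k \<Rightarrow> 'g \<Rightarrow> nat
    \<Rightarrow> (nat \<Rightarrow> 'g \<Rightarrow> 'k) \<Rightarrow> (nat \<Rightarrow> 'g \<Rightarrow> 'k) \<Rightarrow> (nat \<Rightarrow> 'g \<Rightarrow> 'k)" where
  "H_mult G \<chi> \<alpha> g n x y = (\<lambda>k u. if k < n \<and> u \<in> carrier G then
      (\<Sum>i<n. \<Sum>j<n.
          (if i + j = k then ga_mult G (twist \<chi> j (x i)) (y j) u else 0)
        + (if i + j = k + n then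
             ga_mult G (Hrel G \<alpha> g n) (ga_mult G (twist \<chi> j (x i)) (y j)) u else 0))
      else 0)"

definition is_Hideal :: "('g,'b) monoid_scheme \<Rightarrow> ('g \<Rightarrow> 'k::field) \<Rightarrow> 'k \<Rightarrow> 'g \<Rightarrow> nat
    \<Rightarrow> (nat \<Rightarrow> 'g \<Rightarrow> 'k) set \<Rightarrow> bool" where
  "is_Hideal G \<chi> \<alpha> g n I \<longleftrightarrow> I \<subseteq> Hcarr G n \<and> (\<lambda>i u. 0) \<in> I
     \<and> (\<forall>x\<in>I. \<forall>y\<in>I. H_add x y \<in> I)
     \<and> (\<forall>x\<in>I. \<forall>a\<in>Hcarr G n. H_mult G \<chi> \<alpha> g n a x \<in> I \<and> H_mult G \<chi> \<alpha> g n x a \<in> I)"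

definition Hideal_gen :: "('g,'b) monoid_scheme \<Rightarrow> ('g \<Rightarrow> 'k::field) \<Rightarrow> 'k \<Rightarrow> 'g \<Rightarrow> nat
    \<Rightarrow> (nat \<Rightarrow> 'g \<Rightarrow> 'k) set \<Rightarrow> (nat \<Rightarrow> 'g \<Rightarrow> 'k) set" where
  "Hideal_gen G \<chi> \<alpha> g n S = \<Inter>{I. S \<subseteq> I \<and> is_Hideal G \<chi> \<alpha> g n I}"

definition zpow_times :: "nat \<Rightarrow> ('g \<Rightarrow> 'k::field) \<Rightarrow> (nat \<Rightarrow> 'g \<Rightarrow> 'k)" where
  "zpow_times m h = (\<lambda>i. if i = m then h else (\<lambda>u. 0))"

end

theory Submission
  imports Defs "HOL-Library.Function_Algebras"
begin

text \<open>In characteristic zero the group algebra kG of a finite group is semisimple (Maschke):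
  averaging a linear projection onto a left ideal I over G yields a kG-linear projection
  x \<mapsto> x e, so I has a right identity e \<in> I; for a two-sided ideal, the same argument in the
  opposite group gives a left identity, the two coincide, and e is a central idempotent.
  Let e be this idempotent for the two-sided ideal K of kG generated by h1 and h2. Since
  m < n, multiplying z^m x by an element of kG on either side gives z^m x' with x' \<in> kG
  (on the left, after twisting by \<chi>^m), so the ideal of H generated by z^m h1 and z^m h2
  contains z^m K \<ni> z^m e; conversely z^m h_i = (z^m e) h_i.
  Only char k = 0, the finiteness of G and \<chi>(s) \<noteq> 0 are needed.\<close>

definition scale_fun :: "'k::field \<Rightarrow> ('g \<Rightarrow> 'k) \<Rightarrow> ('g \<Rightarrow> 'k)" where
  "scale_fun c f = (\<lambda>u. c * f u)"

lemma vector_space_scale_fun: "vector_space (scale_fun :: 'k::field \<Rightarrow> ('g \<Rightarrow> 'k) \<Rightarrow> _)"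
  by unfold_locales (auto simp: scale_fun_def fun_eq_iff algebra_simps)

lemma linear_projection_exists:
  fixes I :: "('g \<Rightarrow> 'k::field) set"
  assumes "(\<lambda>u. 0) \<in> I" and "\<And>x y. x \<in> I \<Longrightarrow> y \<in> I \<Longrightarrow> (\<lambda>u. x u + y u) \<in> I"
    and "\<And>c x. x \<in> I \<Longrightarrow> (\<lambda>u. c * x u) \<in> I"
  obtains P where "\<And>x y. P (\<lambda>u. x u + y u) = (\<lambda>u. P x u + P y u)"
    and "\<And>c x. P (\<lambda>u. c * x u) = (\<lambda>u. c * P x u)"
    and "\<And>x. P x \<in> I" and "\<And>x. x \<in> I \<Longrightarrow> P x = x"
proof -
  interpret vs: vector_space_pair "scale_fun :: 'k \<Rightarrow> ('g \<Rightarrow> 'k) \<Rightarrow> _" scale_fun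
    by (simp add: vector_space_pair_def vector_space_scale_fun)
  have I: "vs.vs1.subspace I"
    unfolding vs.vs1.subspace_def scale_fun_def zero_fun_def plus_fun_def
    by (intro conjI ballI allI assms)
  \<comment> \<open>a linear left inverse of the inclusion of I is a projection onto I\<close>
  obtain P where range: "range P \<subseteq> I" and P: "Vector_Spaces.linear scale_fun scale_fun P"
      and id_on: "\<forall>x\<in>I. P x = x"
    using vs.linear_exists_left_inverse_on[OF vs.vs1.linear_id I inj_on_id] by auto
  show ?thesis
  proof (rule that)
    show "P (\<lambda>u. x u + y u) = (\<lambda>u. P x u + P y u)" for x y
      using vs.linear_add[OF P] by (simp add: plus_fun_def)
    show "P (\<lambda>u. c * x u) = (\<lambda>u. c * P x u)" for c x
      using vs.linear_scale[OF P] by (simp add: scale_fun_def)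
  qed (use range id_on in auto)
qed

lemma sum_fun_closed:
  assumes "(\<lambda>u. 0) \<in> I" and "\<And>x y. x \<in> I \<Longrightarrow> y \<in> I \<Longrightarrow> (\<lambda>u. x u + y u) \<in> I"
  shows "finite A \<Longrightarrow> (\<And>i. i \<in> A \<Longrightarrow> f i \<in> I) \<Longrightarrow> (\<lambda>u. \<Sum>i\<in>A. f i u) \<in> I"
  by (induction A rule: finite_induct) (use assms in auto)

definition kG_left_ideal :: "('g,'b) monoid_scheme \<Rightarrow> ('g \<Rightarrow> 'k::field) set \<Rightarrow> bool" where
  "kG_left_ideal G I \<longleftrightarrow> I \<subseteq> kG G \<and> (\<lambda>u. 0) \<in> I \<and> (\<forall>x\<in>I. \<forall>y\<in>I. (\<lambda>u. x u + y u) \<in> I)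
     \<and> (\<forall>c. \<forall>x\<in>I. (\<lambda>u. c * x u) \<in> I) \<and> (\<forall>a\<in>kG G. \<forall>x\<in>I. ga_mult G a x \<in> I)"

definition kG_ideal :: "('g,'b) monoid_scheme \<Rightarrow> ('g \<Rightarrow> 'k::field) set \<Rightarrow> bool" where
  "kG_ideal G I \<longleftrightarrow> kG_left_ideal G I \<and> (\<forall>a\<in>kG G. \<forall>x\<in>I. ga_mult G x a \<in> I)"

lemma ga_mult_add_right:
  "ga_mult G a (\<lambda>u. x u + y u) = (\<lambda>u. ga_mult G a x u + ga_mult G a y u)"
  by (auto simp: ga_mult_def fun_eq_iff distrib_left sum.distrib)

lemma ga_mult_scale_left: "ga_mult G (\<lambda>u. c * x u) a = (\<lambda>u. c * ga_mult G x a u)"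
  by (auto simp: ga_mult_def fun_eq_iff sum_distrib_left mult.assoc)

lemma ga_mult_scale_right: "ga_mult G a (\<lambda>u. c * x u) = (\<lambda>u. c * ga_mult G a x u)"
  by (auto simp: ga_mult_def fun_eq_iff sum_distrib_left mult.left_commute)

lemma ga_mult_sum_right:
  "ga_mult G a (\<lambda>u. \<Sum>i\<in>A. f i u) = (\<lambda>u. \<Sum>i\<in>A. ga_mult G a (f i) u)"
  by (auto simp: ga_mult_def fun_eq_iff sum_distrib_left intro: sum.swap)

lemma ga_delta_in_kG: "s \<in> carrier G \<Longrightarrow> ga_delta G s \<in> kG G"
  by (auto simp: kG_def ga_delta_def)

definition ga_average ::
    "('g,'b) monoid_scheme \<Rightarrow> (('g \<Rightarrow> 'k::field) \<Rightarrow> ('g \<Rightarrow> 'k)) \<Rightarrow> ('g \<Rightarrow> 'k) \<Rightarrow> ('g \<Rightarrow> 'k)" where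
  "ga_average G P x = (\<lambda>u. inverse (of_nat (card (carrier G))) *
     (\<Sum>s\<in>carrier G. ga_mult G (ga_delta G s) (P (ga_mult G (ga_delta G (inv\<^bsub>G\<^esub> s)) x)) u))"

context
  fixes G :: "('g,'b) monoid_scheme" (structure)
  assumes G_group: "group G" and G_finite: "finite (carrier G)"
begin

interpretation group G by (rule G_group)

lemma sum_carrier_mult_left:
  "s \<in> carrier G \<Longrightarrow> (\<Sum>t\<in>carrier G. f (s \<otimes> t)) = (\<Sum>t\<in>carrier G. f t)"
  by (rule sum.reindex_bij_witness[where i="\<lambda>t. inv s \<otimes> t" and j="\<lambda>t. s \<otimes> t"])
     (auto simp: m_assoc[symmetric])

lemma ga_mult_assoc: "ga_mult G (ga_mult G a b) c = ga_mult G a (ga_mult G b c)"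
proof (rule ext)
  fix u
  show "ga_mult G (ga_mult G a b) c u = ga_mult G a (ga_mult G b c) u"
  proof (cases "u \<in> carrier G")
    case u: True
    have inner: "(\<Sum>r\<in>carrier G. b r * c (inv r \<otimes> (inv s \<otimes> u)))
        = (\<Sum>t\<in>carrier G. b (inv s \<otimes> t) * c (inv t \<otimes> u))" if s: "s \<in> carrier G" for s
    proof -
      have "inv (inv s \<otimes> t) \<otimes> (inv s \<otimes> u) = inv t \<otimes> u" if "t \<in> carrier G" for t
        using s that u by (simp add: inv_mult_group m_assoc) (simp add: m_assoc[symmetric])
      then show ?thesis
        using sum_carrier_mult_left[of "inv s" "\<lambda>r. b r * c (inv r \<otimes> (inv s \<otimes> u))"] s
        by (auto intro: sum.cong)
    qed
    have "ga_mult G (ga_mult G a b) c u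
        = (\<Sum>t\<in>carrier G. \<Sum>s\<in>carrier G. a s * b (inv s \<otimes> t) * c (inv t \<otimes> u))"
      using u by (simp add: ga_mult_def sum_distrib_right)
    also have "\<dots> = (\<Sum>s\<in>carrier G. a s * (\<Sum>t\<in>carrier G. b (inv s \<otimes> t) * c (inv t \<otimes> u)))"
      by (subst sum.swap) (simp add: sum_distrib_left mult.assoc)
    also have "\<dots> = ga_mult G a (ga_mult G b c) u"
      using u inner by (simp add: ga_mult_def)
    finally show ?thesis .
  qed (simp add: ga_mult_def)
qed

lemma ga_mult_delta_left:
  assumes "s \<in> carrier G"
  shows "ga_mult G (ga_delta G s) x = (\<lambda>u. if u \<in> carrier G then x (inv s \<otimes> u) else 0)"
proof -
  have "(\<Sum>t\<in>carrier G. ga_delta G s t * x (inv t \<otimes> u))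
      = (\<Sum>t\<in>carrier G. if t = s then x (inv t \<otimes> u) else 0)" for u
    by (rule sum.cong) (auto simp: ga_delta_def)
  then show ?thesis using assms G_finite by (simp add: ga_mult_def fun_eq_iff)
qed

lemma ga_mult_delta_right:
  assumes "s \<in> carrier G"
  shows "ga_mult G x (ga_delta G s) = (\<lambda>u. if u \<in> carrier G then x (u \<otimes> inv s) else 0)"
proof -
  have "(\<Sum>t\<in>carrier G. x t * ga_delta G s (inv t \<otimes> u)) = x (u \<otimes> inv s)"
    if u: "u \<in> carrier G" for u
  proof -
    have "inv t \<otimes> u = s \<longleftrightarrow> t = u \<otimes> inv s" if "t \<in> carrier G" for t
      using inv_solve_left'[of s t u] inv_solve_right[of t u s] that assms u by auto
    then have "(\<Sum>t\<in>carrier G. x t * ga_delta G s (inv t \<otimes> u))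
        = (\<Sum>t\<in>carrier G. if t = u \<otimes> inv s then x t else 0)"
      by (intro sum.cong) (auto simp: ga_delta_def)
    then show ?thesis using assms u G_finite by simp
  qed
  then show ?thesis by (simp add: ga_mult_def fun_eq_iff)
qed

lemma ga_mult_one_left: "x \<in> kG G \<Longrightarrow> ga_mult G (ga_delta G \<one>) x = x"
  by (auto simp: ga_mult_delta_left fun_eq_iff kG_def)

lemma ga_mult_one_right: "x \<in> kG G \<Longrightarrow> ga_mult G x (ga_delta G \<one>) = x"
  by (auto simp: ga_mult_delta_right fun_eq_iff kG_def)

lemma ga_mult_delta_delta:
  "s \<in> carrier G \<Longrightarrow> t \<in> carrier G \<Longrightarrow>
    ga_mult G (ga_delta G s) (ga_delta G t) = ga_delta G (s \<otimes> t)"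
proof -
  assume s: "s \<in> carrier G" and t: "t \<in> carrier G"
  have "u \<in> carrier G \<Longrightarrow> inv s \<otimes> u = t \<longleftrightarrow> u = s \<otimes> t" for u
    using inv_solve_left' s t by blast
  then show ?thesis unfolding ga_mult_delta_left[OF s] using s t by (auto simp: fun_eq_iff ga_delta_def)
qed

lemma ga_mult_eq_sum_delta:
  "ga_mult G y x = (\<lambda>u. \<Sum>r\<in>carrier G. y r * ga_mult G (ga_delta G r) x u)"
proof -
  have "(\<Sum>r\<in>carrier G. y r * ga_mult G (ga_delta G r) x u)
     = (\<Sum>r\<in>carrier G. y r * (if u \<in> carrier G then x (inv r \<otimes> u) else 0))" for u
    by (rule sum.cong) (simp_all add: ga_mult_delta_left)
  then show ?thesis by (simp add: ga_mult_def fun_eq_iff)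
qed

lemma ga_average_in_left_ideal:
  assumes I: "kG_left_ideal G I" and P: "\<And>x. P x \<in> I"
  shows "ga_average G P x \<in> I"
proof -
  have "(\<lambda>u. \<Sum>s\<in>carrier G. ga_mult G (ga_delta G s) (P (ga_mult G (ga_delta G (inv s)) x)) u) \<in> I"
    using I P G_finite by (intro sum_fun_closed) (simp_all add: kG_left_ideal_def ga_delta_in_kG)
  then show ?thesis using I by (simp add: ga_average_def kG_left_ideal_def)
qed

lemma ga_average_id_on_left_ideal:
  fixes P :: "('g \<Rightarrow> 'k::field_char_0) \<Rightarrow> ('g \<Rightarrow> 'k)"
  assumes I: "kG_left_ideal G I" and P: "\<And>x. x \<in> I \<Longrightarrow> P x = x" and x: "x \<in> I"
  shows "ga_average G P x = x"
proof -
  have "ga_mult G (ga_delta G s) (P (ga_mult G (ga_delta G (inv s)) x)) = x"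
    if s: "s \<in> carrier G" for s
  proof -
    have "ga_mult G (ga_delta G (inv s)) x \<in> I"
      using I x s by (simp add: kG_left_ideal_def ga_delta_in_kG)
    moreover have "x \<in> kG G" using I x by (auto simp: kG_left_ideal_def)
    ultimately show ?thesis
      using s P by (simp add: ga_mult_assoc[symmetric] ga_mult_delta_delta ga_mult_one_left)
  qed
  \<comment> \<open>dividing by |G| is the one place where characteristic zero is used\<close>
  moreover have "card (carrier G) \<noteq> 0"
    using G_finite by (auto simp: card_eq_0_iff)
  ultimately show ?thesis by (simp add: ga_average_def mult.assoc[symmetric])
qed

lemma ga_average_mult_delta:
  assumes r: "r \<in> carrier G"
  shows "ga_average G P (ga_mult G (ga_delta G r) x) = ga_mult G (ga_delta G r) (ga_average G P x)"
proof -
  let ?f = "\<lambda>y s. ga_mult G (ga_delta G s) (P (ga_mult G (ga_delta G (inv s)) y))"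
  have "?f (ga_mult G (ga_delta G r) x) (r \<otimes> t) = ga_mult G (ga_delta G r) (?f x t)"
    if t: "t \<in> carrier G" for t
    using r t by (simp add: ga_mult_assoc[symmetric] ga_mult_delta_delta inv_mult_group m_assoc)
  then have "(\<Sum>s\<in>carrier G. ?f (ga_mult G (ga_delta G r) x) s u)
      = (\<Sum>t\<in>carrier G. ga_mult G (ga_delta G r) (?f x t) u)" for u
    using sum_carrier_mult_left[OF r, of "\<lambda>s. ?f (ga_mult G (ga_delta G r) x) s u"] by simp
  then show ?thesis
    by (simp add: ga_average_def ga_mult_scale_right ga_mult_sum_right)
qed

lemma ga_average_mult:
  fixes P :: "('g \<Rightarrow> 'k::field) \<Rightarrow> ('g \<Rightarrow> 'k)"
  assumes add: "\<And>x y. P (\<lambda>u. x u + y u) = (\<lambda>u. P x u + P y u)"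
    and scale: "\<And>c x. P (\<lambda>u. c * x u) = (\<lambda>u. c * P x u)"
  shows "ga_average G P (ga_mult G y x) = ga_mult G y (ga_average G P x)"
proof -
  let ?Q = "ga_average G P"
  have Q_add: "?Q (\<lambda>u. x u + y u) = (\<lambda>u. ?Q x u + ?Q y u)" for x y
    by (simp add: ga_average_def ga_mult_add_right add sum.distrib distrib_left)
  have Q_scale: "?Q (\<lambda>u. c * x u) = (\<lambda>u. c * ?Q x u)" for c x
    by (simp add: ga_average_def ga_mult_scale_right scale sum_distrib_left mult.left_commute)
  have Q_sum: "?Q (\<lambda>u. \<Sum>r\<in>A. f r u) = (\<lambda>u. \<Sum>r\<in>A. ?Q (f r) u)" if "finite A"
    for A and f :: "'x \<Rightarrow> 'g \<Rightarrow> 'k"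
    using that
  proof (induction A rule: finite_induct)
    case empty
    then show ?case using Q_scale[of 0 "\<lambda>u. 0"] by simp
  next
    case (insert a A)
    then show ?case using Q_add[of "f a" "\<lambda>u. \<Sum>r\<in>A. f r u"] by simp
  qed
  have "?Q (ga_mult G y x) = ?Q (\<lambda>u. \<Sum>r\<in>carrier G. y r * ga_mult G (ga_delta G r) x u)"
    by (subst ga_mult_eq_sum_delta) (rule refl)
  also have "\<dots> = (\<lambda>u. \<Sum>r\<in>carrier G. y r * ga_mult G (ga_delta G r) (?Q x) u)"
    using G_finite by (simp add: Q_sum Q_scale ga_average_mult_delta)
  also have "\<dots> = ga_mult G y (?Q x)"
    by (subst (2) ga_mult_eq_sum_delta) (rule refl)
  finally show ?thesis .
qed

lemma kG_left_ideal_right_unit: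
  fixes I :: "('g \<Rightarrow> 'k::field_char_0) set"
  assumes I: "kG_left_ideal G I"
  obtains e where "e \<in> I" and "\<And>x. x \<in> I \<Longrightarrow> ga_mult G x e = x"
proof -
  have I_subspace: "(\<lambda>u. 0) \<in> I" "\<And>x y. x \<in> I \<Longrightarrow> y \<in> I \<Longrightarrow> (\<lambda>u. x u + y u) \<in> I"
    "\<And>c x. x \<in> I \<Longrightarrow> (\<lambda>u. c * x u) \<in> I"
    using I by (simp_all add: kG_left_ideal_def)
  obtain P where add: "\<And>x y. P (\<lambda>u. x u + y u) = (\<lambda>u. P x u + P y u)"
    and scale: "\<And>c x. P (\<lambda>u. c * x u) = (\<lambda>u. c * P x u)"
    and P_in: "\<And>x. P x \<in> I" and P_id: "\<And>x. x \<in> I \<Longrightarrow> P x = x"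
    using linear_projection_exists[OF I_subspace] by blast
  show ?thesis
  proof (rule that)
    show "ga_average G P (ga_delta G \<one>) \<in> I"
      using I P_in by (rule ga_average_in_left_ideal)
    fix x assume x: "x \<in> I"
    moreover have "x \<in> kG G" using x I by (auto simp: kG_left_ideal_def)
    ultimately have "x = ga_average G P (ga_mult G x (ga_delta G \<one>))"
      using ga_average_id_on_left_ideal[OF I P_id] by (simp add: ga_mult_one_right)
    then show "ga_mult G x (ga_average G P (ga_delta G \<one>)) = x"
      by (simp add: ga_average_mult[OF add scale])
  qed
qed

end

definition opposite_monoid :: "('g,'b) monoid_scheme \<Rightarrow> ('g,'b) monoid_scheme" where
  "opposite_monoid G = G\<lparr>mult := \<lambda>x y. y \<otimes>\<^bsub>G\<^esub> x\<rparr>"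

lemma opposite_monoid_simps [simp]:
  "carrier (opposite_monoid G) = carrier G"
  "\<one>\<^bsub>opposite_monoid G\<^esub> = \<one>\<^bsub>G\<^esub>"
  "x \<otimes>\<^bsub>opposite_monoid G\<^esub> y = y \<otimes>\<^bsub>G\<^esub> x"
  by (simp_all add: opposite_monoid_def)

lemma group_opposite_monoid:
  fixes G :: "('g,'b) monoid_scheme" (structure)
  assumes "group G"
  shows "group (opposite_monoid G)"
proof -
  interpret group G by (rule assms)
  show ?thesis
    by (rule groupI) (auto simp: m_assoc intro!: bexI[of _ "inv x" for x])
qed

lemma opposite_monoid_inv:
  assumes "group G" and "x \<in> carrier G"
  shows "inv\<^bsub>opposite_monoid G\<^esub> x = inv\<^bsub>G\<^esub> x"
proof -
  interpret op: group "opposite_monoid G" using group_opposite_monoid[OF assms(1)] .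
  show ?thesis by (rule op.inv_equality) (use assms in \<open>simp_all add: group.r_inv\<close>)
qed

lemma ga_mult_opposite_monoid:
  fixes G :: "('g,'b) monoid_scheme" (structure)
  assumes "group G"
  shows "ga_mult (opposite_monoid G) a b = ga_mult G b a"
proof (rule ext)
  interpret group G by (rule assms)
  fix u
  show "ga_mult (opposite_monoid G) a b u = ga_mult G b a u"
  proof (cases "u \<in> carrier G")
    case u: True
    have "(\<Sum>t\<in>carrier G. b t * a (inv t \<otimes> u)) = (\<Sum>s\<in>carrier G. a s * b (u \<otimes> inv s))"
      by (rule sum.reindex_bij_witness[where j="\<lambda>t. inv t \<otimes> u" and i="\<lambda>s. u \<otimes> inv s"])
         (use u in \<open>auto simp: inv_mult_group m_assoc, simp_all add: m_assoc[symmetric]\<close>)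
    then show ?thesis using u assms by (simp add: ga_mult_def opposite_monoid_inv)
  qed (simp add: ga_mult_def)
qed

lemma kG_ideal_imp_left_ideal_opposite:
  "group G \<Longrightarrow> kG_ideal G I \<Longrightarrow> kG_left_ideal (opposite_monoid G) I"
  by (simp add: kG_ideal_def kG_left_ideal_def kG_def ga_mult_opposite_monoid)

lemma kG_ideal_central_idempotent:
  fixes G :: "('g,'b) monoid_scheme" and I :: "('g \<Rightarrow> 'k::field_char_0) set"
  assumes G: "group G" "finite (carrier G)" and I: "kG_ideal G I"
  obtains e where "e \<in> I" and "e \<in> kG_center G" and "ga_mult G e e = e"
    and "\<And>x. x \<in> I \<Longrightarrow> ga_mult G e x = x"
proof -
  have I_left: "kG_left_ideal G I" using I by (simp add: kG_ideal_def)
  obtain e where e: "e \<in> I" and right_unit: "\<And>x. x \<in> I \<Longrightarrow> ga_mult G x e = x"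
    using kG_left_ideal_right_unit[OF G I_left] by blast
  obtain f where f: "f \<in> I"
    and "\<And>x. x \<in> I \<Longrightarrow> ga_mult (opposite_monoid G) x f = x"
    using kG_left_ideal_right_unit[OF group_opposite_monoid[OF G(1)] _
        kG_ideal_imp_left_ideal_opposite[OF G(1) I]] G(2)
    by auto
  then have left_unit: "\<And>x. x \<in> I \<Longrightarrow> ga_mult G f x = x"
    by (simp add: ga_mult_opposite_monoid[OF G(1)])
  have "e = f" using right_unit[OF f] left_unit[OF e] by simp
  have "ga_mult G a e = ga_mult G e a" if a: "a \<in> kG G" for a
  proof -
    have "ga_mult G a e \<in> I" and "ga_mult G e a \<in> I"
      using I a e by (simp_all add: kG_ideal_def kG_left_ideal_def)
    then have "ga_mult G a e = ga_mult G e (ga_mult G a e)"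
      and "ga_mult G e a = ga_mult G (ga_mult G e a) e"
      using left_unit right_unit \<open>e = f\<close> by simp_all
    then show ?thesis by (simp add: ga_mult_assoc[OF G])
  qed
  moreover have "e \<in> kG G" using I e by (auto simp: kG_ideal_def kG_left_ideal_def)
  ultimately have "e \<in> kG_center G" by (simp add: kG_center_def)
  then show ?thesis using that e right_unit left_unit \<open>e = f\<close> by blast
qed

inductive_set kG_ideal_gen :: "('g,'b) monoid_scheme \<Rightarrow> ('g \<Rightarrow> 'k::field) set \<Rightarrow> ('g \<Rightarrow> 'k) set"
  for G S where
  gen_base: "x \<in> S \<Longrightarrow> x \<in> kG_ideal_gen G S"
| gen_zero: "(\<lambda>u. 0) \<in> kG_ideal_gen G S"
| gen_add: "x \<in> kG_ideal_gen G S \<Longrightarrow> y \<in> kG_ideal_gen G S \<Longrightarrow> (\<lambda>u. x u + y u) \<in> kG_ideal_gen G S"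
| gen_mult_left: "a \<in> kG G \<Longrightarrow> x \<in> kG_ideal_gen G S \<Longrightarrow> ga_mult G a x \<in> kG_ideal_gen G S"
| gen_mult_right: "a \<in> kG G \<Longrightarrow> x \<in> kG_ideal_gen G S \<Longrightarrow> ga_mult G x a \<in> kG_ideal_gen G S"

lemma kG_ideal_gen_subset_kG: "S \<subseteq> kG G \<Longrightarrow> kG_ideal_gen G S \<subseteq> kG G"
proof
  fix x assume S: "S \<subseteq> kG G" and x: "x \<in> kG_ideal_gen G S"
  from x show "x \<in> kG G"
    by (induction rule: kG_ideal_gen.induct) (use S in \<open>auto simp: kG_def ga_mult_def\<close>)
qed

lemma kG_ideal_kG_ideal_gen:
  assumes G: "group G" "finite (carrier G)" and S: "S \<subseteq> kG G"
  shows "kG_ideal G (kG_ideal_gen G S)"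
proof -
  have "(\<lambda>u. c * x u) \<in> kG_ideal_gen G S" if x: "x \<in> kG_ideal_gen G S" for c x
  proof -
    have "(\<lambda>u. c * ga_delta G \<one>\<^bsub>G\<^esub> u) \<in> kG G"
      using G by (simp add: kG_def ga_delta_def group.is_monoid)
    then have "ga_mult G (\<lambda>u. c * ga_delta G \<one>\<^bsub>G\<^esub> u) x \<in> kG_ideal_gen G S"
      by (rule gen_mult_left[OF _ x])
    moreover have "x \<in> kG G" using kG_ideal_gen_subset_kG[OF S] x by blast
    ultimately show ?thesis by (simp add: ga_mult_scale_left ga_mult_one_left[OF G])
  qed
  then show ?thesis
    using kG_ideal_gen_subset_kG[OF S]
    by (auto simp: kG_ideal_def kG_left_ideal_def intro: kG_ideal_gen.intros)
qed

lemma twist_0 [simp]: "twist \<chi> 0 a = a"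
  by (simp add: twist_def)

lemma zpow_times_in_Hcarr: "m < n \<Longrightarrow> h \<in> kG G \<Longrightarrow> zpow_times m h \<in> Hcarr G n"
  by (auto simp: Hcarr_def zpow_times_def kG_def)

lemma H_mult_zpow_times:
  assumes "i + j < n"
  shows "H_mult G \<chi> \<alpha> g n (zpow_times i a) (zpow_times j b)
    = zpow_times (i + j) (ga_mult G (twist \<chi> j a) b)"
proof (intro ext)
  fix k u
  define F where "F i' j' =
    (if i' + j' = k then ga_mult G (twist \<chi> j' (zpow_times i a i')) (zpow_times j b j') u else 0)
    + (if i' + j' = k + n
       then ga_mult G (Hrel G \<alpha> g n) (ga_mult G (twist \<chi> j' (zpow_times i a i')) (zpow_times j b j')) u
       else 0)" for i' j'
  have "ga_mult G (twist \<chi> j' (zpow_times i a i')) (zpow_times j b j') = (\<lambda>u. 0)"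
    if "i' \<noteq> i \<or> j' \<noteq> j" for i' j'
    using that by (auto simp: zpow_times_def twist_def ga_mult_def fun_eq_iff)
  then have F_zero: "F i' j' = 0" if "i' \<noteq> i \<or> j' \<noteq> j" for i' j'
    using that by (simp add: F_def ga_mult_def)
  have sum_single: "(\<Sum>x<n. f x) = f x\<^sub>0" if "x\<^sub>0 < n" and "\<And>x. x \<noteq> x\<^sub>0 \<Longrightarrow> f x = 0"
    for f :: "nat \<Rightarrow> _" and x\<^sub>0
    using that by (subst sum.mono_neutral_right[of "{..<n}" "{x\<^sub>0}"]) auto
  have "H_mult G \<chi> \<alpha> g n (zpow_times i a) (zpow_times j b) k u
      = (if k < n \<and> u \<in> carrier G then \<Sum>i'<n. \<Sum>j'<n. F i' j' else 0)"
    by (simp add: H_mult_def F_def)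
  also have "(\<Sum>i'<n. \<Sum>j'<n. F i' j') = (\<Sum>j'<n. F i j')"
    using assms by (intro sum_single) (auto simp: F_zero)
  also have "\<dots> = F i j"
    using assms by (intro sum_single) (auto simp: F_zero)
  also have "\<dots> = (if i + j = k then ga_mult G (twist \<chi> j a) b u else 0)"
    using assms by (simp add: F_def zpow_times_def)
  finally show "H_mult G \<chi> \<alpha> g n (zpow_times i a) (zpow_times j b) k u
      = zpow_times (i + j) (ga_mult G (twist \<chi> j a) b) k u"
    using assms by (auto simp: zpow_times_def ga_mult_def)
qed

lemma Hideal_zpow_times_mult_right:
  assumes "is_Hideal G \<chi> \<alpha> g n I" and "zpow_times m x \<in> I" and "a \<in> kG G" and "m < n"
  shows "zpow_times m (ga_mult G x a) \<in> I"
proof -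
  have "H_mult G \<chi> \<alpha> g n (zpow_times m x) (zpow_times 0 a) \<in> I"
    using assms zpow_times_in_Hcarr[of 0 n a G] by (simp add: is_Hideal_def)
  then show ?thesis using H_mult_zpow_times[of m 0 n G \<chi> \<alpha> g x a] assms(4) by simp
qed

lemma Hideal_zpow_times_mult_left:
  assumes "is_Hideal G \<chi> \<alpha> g n I" and "zpow_times m x \<in> I" and "a \<in> kG G" and "m < n"
    and \<chi>: "\<forall>s\<in>carrier G. \<chi> s \<noteq> 0"
  shows "zpow_times m (ga_mult G a x) \<in> I"
proof -
  define a' where "a' = (\<lambda>s. \<chi> s ^ m * a s)"
  have "a' \<in> kG G" using assms(3) by (simp add: kG_def a'_def)
  moreover have "twist \<chi> m a' = a"
  proof (rule ext)
    fix s
    show "twist \<chi> m a' s = a s"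
    proof (cases "s \<in> carrier G")
      case True
      then have "inverse (\<chi> s) ^ m * \<chi> s ^ m = 1"
        using \<chi> by (simp add: power_mult_distrib[symmetric])
      then show ?thesis by (simp add: twist_def a'_def mult.assoc[symmetric])
    qed (use assms(3) in \<open>simp add: twist_def a'_def kG_def\<close>)
  qed
  then have "H_mult G \<chi> \<alpha> g n (zpow_times 0 a') (zpow_times m x) = zpow_times m (ga_mult G a x)"
    using H_mult_zpow_times[of 0 m n G \<chi> \<alpha> g a' x] assms(4) by simp
  moreover have "H_mult G \<chi> \<alpha> g n (zpow_times 0 a') (zpow_times m x) \<in> I"
    using assms(1,2,4) zpow_times_in_Hcarr[of 0 n a' G] \<open>a' \<in> kG G\<close> by (simp add: is_Hideal_def)
  ultimately show ?thesis by simp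
qed

lemma Hideal_zpow_times_kG_ideal_gen:
  assumes I: "is_Hideal G \<chi> \<alpha> g n I" and S: "\<And>x. x \<in> S \<Longrightarrow> zpow_times m x \<in> I"
    and "m < n" and "\<forall>s\<in>carrier G. \<chi> s \<noteq> 0"
  shows "x \<in> kG_ideal_gen G S \<Longrightarrow> zpow_times m x \<in> I"
proof (induction rule: kG_ideal_gen.induct)
  case gen_zero
  then show ?case using I by (simp add: zpow_times_def is_Hideal_def)
next
  case (gen_add x y)
  have "zpow_times m (\<lambda>u. x u + y u) = H_add (zpow_times m x) (zpow_times m y)"
    by (auto simp: H_add_def zpow_times_def fun_eq_iff)
  then show ?case using I gen_add.IH by (simp add: is_Hideal_def)
qed (use assms in \<open>auto intro: Hideal_zpow_times_mult_left Hideal_zpow_times_mult_right\<close>)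

lemma Hideal_gen_eqI:
  assumes "\<And>I. is_Hideal G \<chi> \<alpha> g n I \<Longrightarrow> S \<subseteq> I \<longleftrightarrow> T \<subseteq> I"
  shows "Hideal_gen G \<chi> \<alpha> g n S = Hideal_gen G \<chi> \<alpha> g n T"
proof -
  have "{I. S \<subseteq> I \<and> is_Hideal G \<chi> \<alpha> g n I} = {I. T \<subseteq> I \<and> is_Hideal G \<chi> \<alpha> g n I}"
    using assms by (intro Collect_cong) auto
  then show ?thesis unfolding Hideal_gen_def by (rule arg_cong[where f=Inter])
qed

lemma Hideal_gen_zpow_times_eq:
  assumes "m < n" and "\<forall>s\<in>carrier G. \<chi> s \<noteq> 0" and "S \<subseteq> kG G"
    and e: "e \<in> kG_ideal_gen G S" and unit: "\<And>x. x \<in> S \<Longrightarrow> ga_mult G e x = x"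
  shows "Hideal_gen G \<chi> \<alpha> g n (zpow_times m ` S) = Hideal_gen G \<chi> \<alpha> g n {zpow_times m e}"
proof (rule Hideal_gen_eqI)
  fix I assume I: "is_Hideal G \<chi> \<alpha> g n I"
  show "zpow_times m ` S \<subseteq> I \<longleftrightarrow> {zpow_times m e} \<subseteq> I"
  proof
    assume "zpow_times m ` S \<subseteq> I"
    then show "{zpow_times m e} \<subseteq> I"
      using Hideal_zpow_times_kG_ideal_gen[OF I _ assms(1,2) e] by blast
  next
    assume "{zpow_times m e} \<subseteq> I"
    then have "zpow_times m (ga_mult G e x) \<in> I" if "x \<in> S" for x
      using Hideal_zpow_times_mult_right[OF I _ _ assms(1)] that assms(3) by auto
    then show "zpow_times m ` S \<subseteq> I" using unit by auto
  qed
qed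

theorem lemma3p2:
  fixes G :: "('g, 'b) monoid_scheme" and \<chi> :: "'g \<Rightarrow> 'k::field_char_0"
    and g :: 'g and n :: nat and \<alpha> :: 'k
  assumes "alg_closed TYPE('k)"
    and "group G" and "finite (carrier G)"
    and "\<forall>s\<in>carrier G. \<chi> s \<noteq> 0"
    and "\<forall>s\<in>carrier G. \<forall>t\<in>carrier G. \<chi> (s \<otimes>\<^bsub>G\<^esub> t) = \<chi> s * \<chi> t"
    and "g \<in> carrier G" and "\<forall>s\<in>carrier G. g \<otimes>\<^bsub>G\<^esub> s = s \<otimes>\<^bsub>G\<^esub> g"
    and "n = (LEAST k. 0 < k \<and> \<chi> g ^ k = 1)" and "2 \<le> n"
    and "Hrel G \<alpha> g n = (\<lambda>u. 0) \<or> (\<forall>s\<in>carrier G. \<chi> s ^ n = 1)"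
    and "h1 \<in> kG G" and "h2 \<in> kG G" and "m \<le> n - 1"
  shows "\<exists>h\<in>kG_center G. ga_mult G h h = h \<and>
    Hideal_gen G \<chi> \<alpha> g n {zpow_times m h1, zpow_times m h2}
      = Hideal_gen G \<chi> \<alpha> g n {zpow_times m h}"
proof -
  have "m < n" using assms(9,13) by simp
  let ?K = "kG_ideal_gen G {h1, h2}"
  have "kG_ideal G ?K" using assms(2,3,11,12) by (simp add: kG_ideal_kG_ideal_gen)
  then obtain e where "e \<in> ?K" and e: "e \<in> kG_center G" "ga_mult G e e = e"
    and unit: "\<And>x. x \<in> ?K \<Longrightarrow> ga_mult G e x = x"
    using kG_ideal_central_idempotent[OF assms(2,3)] by blast
  have "Hideal_gen G \<chi> \<alpha> g n (zpow_times m ` {h1, h2}) = Hideal_gen G \<chi> \<alpha> g n {zpow_times m e}"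
    using \<open>m < n\<close> assms(4,11,12) \<open>e \<in> ?K\<close> unit[OF gen_base]
    by (intro Hideal_gen_zpow_times_eq) auto
  then show ?thesis using e by (intro bexI[of _ e]) auto
qed

end
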